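(* Let $L$ be an invariant intrinsic location functional and $\mathbf X$ a periodic stationary process with period $1$. Then $L(\mathbf X,[0,1])$ is uniformly distributed on $[0,1]$; in particular its density on $(0,1)$ equals $1$.
   Context: Let $H$ be a set of functions $\mathbb R\to\mathbb R$ with period $1$, invariant under shifts ($\theta_cg(x)=g(x+c)$), with the cylindrical $\sigma$-field; $\mathcal I$ is the set of compact intervals $[a,b]$, $a<b$. An intrinsic location functional is a map $L:H\times\mathcal I\to\mathbb R\cup\{\infty\}$ such that: (i) $L(\cdot,I)$ is measurable; (ii) $L(g,I)\in I\cup\{\infty\}$; (iii) $L(g,I)=L(\theta_cg,I-c)+c$ (with $\infty+c=\infty$); (iv) if $I_2\subseteq I_1$ and $L(g,I_1)\in I_2$ then $L(g,I_2)=L(g,I_1)$; (v) if $I_2\subseteq I_1$ and $L(g,I_2)\ne\infty$ then $L(g,I_1)\neq\infty$. It is called invariant if moreover $L(g,I)\ne\infty$ for all $g\in H$, $I\in\mathcal I$, and $L(g,[0,1])=L(g,[a,a+1])\pmod 1$ for all $a\in\mathbb R$, $g\in H$. A periodic stationary process with period $1$ is a stationary process with continuous sample paths of period $1$ lying in $H$. *)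

theory Defs
  imports "HOL-Probability.Probability"
begin

definition shift_fun :: "real \<Rightarrow> (real \<Rightarrow> real) \<Rightarrow> (real \<Rightarrow> real)" where
  "shift_fun c g = (\<lambda>x. g (x + c))"

definition periodic_shift_space :: "(real \<Rightarrow> real) set \<Rightarrow> bool" where
  "periodic_shift_space H \<longleftrightarrow>
     (\<forall>g\<in>H. \<forall>x. g (x + 1) = g x) \<and> (\<forall>g\<in>H. \<forall>c. shift_fun c g \<in> H)"

definition cyl_sigma :: "(real \<Rightarrow> real) set \<Rightarrow> (real \<Rightarrow> real) measure" where
  "cyl_sigma H = sigma H {{g \<in> H. g t \<in> B} | t B. B \<in> sets borel}"

definition compact_intervals :: "real set set" where
  "compact_intervals = {{a..b} | a b. a < b}"

definition intrinsic_location_functional ::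
  "(real \<Rightarrow> real) set \<Rightarrow> ((real \<Rightarrow> real) \<Rightarrow> real set \<Rightarrow> ereal) \<Rightarrow> bool" where
  "intrinsic_location_functional H L \<longleftrightarrow>
     (\<forall>I\<in>compact_intervals. (\<lambda>g. L g I) \<in> borel_measurable (cyl_sigma H)) \<and>
     (\<forall>g\<in>H. \<forall>I\<in>compact_intervals. L g I \<in> ereal ` I \<union> {\<infinity>}) \<and>
     (\<forall>g\<in>H. \<forall>I\<in>compact_intervals. \<forall>c.
        L g I = L (shift_fun c g) ((\<lambda>x. x - c) ` I) + ereal c) \<and>
     (\<forall>g\<in>H. \<forall>I1\<in>compact_intervals. \<forall>I2\<in>compact_intervals.
        I2 \<subseteq> I1 \<and> L g I1 \<in> ereal ` I2 \<longrightarrow> L g I2 = L g I1) \<and>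
     (\<forall>g\<in>H. \<forall>I1\<in>compact_intervals. \<forall>I2\<in>compact_intervals.
        I2 \<subseteq> I1 \<and> L g I2 \<noteq> \<infinity> \<longrightarrow> L g I1 \<noteq> \<infinity>)"

definition invariant_ilf ::
  "(real \<Rightarrow> real) set \<Rightarrow> ((real \<Rightarrow> real) \<Rightarrow> real set \<Rightarrow> ereal) \<Rightarrow> bool" where
  "invariant_ilf H L \<longleftrightarrow>
     intrinsic_location_functional H L \<and>
     (\<forall>g\<in>H. \<forall>I\<in>compact_intervals. L g I \<noteq> \<infinity>) \<and>
     (\<forall>g\<in>H. \<forall>a::real.
        real_of_ereal (L g {0..1}) - real_of_ereal (L g {a..a+1}) \<in> \<int>)"

definition stationary_process :: "'a measure \<Rightarrow> ('a \<Rightarrow> real \<Rightarrow> real) \<Rightarrow> bool" where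
  "stationary_process M X \<longleftrightarrow>
     (\<forall>t. (\<lambda>\<omega>. X \<omega> t) \<in> borel_measurable M) \<and>
     (\<forall>J c. finite J \<longrightarrow>
        distr M (PiM J (\<lambda>_. borel)) (\<lambda>\<omega>. \<lambda>t\<in>J. X \<omega> (t + c)) =
        distr M (PiM J (\<lambda>_. borel)) (\<lambda>\<omega>. \<lambda>t\<in>J. X \<omega> t))"

definition periodic_stationary_process ::
  "'a measure \<Rightarrow> (real \<Rightarrow> real) set \<Rightarrow> ('a \<Rightarrow> real \<Rightarrow> real) \<Rightarrow> bool" where
  "periodic_stationary_process M H X \<longleftrightarrow>
     stationary_process M X \<and>
     (\<forall>\<omega>\<in>space M. continuous_on UNIV (X \<omega>) \<and> (\<forall>x. X \<omega> (x + 1) = X \<omega> x) \<and> X \<omega> \<in> H)"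

end

theory Submission
  imports Defs
begin

text \<open>
  By shift equivariance and invariance, \<open>L(X,[0,1]) \<equiv> L(\<theta>\<^sub>cX,[0,1]) + c (mod 1)\<close> for every \<open>c\<close>,
  and by stationarity \<open>L(\<theta>\<^sub>cX,[0,1])\<close> has the same law as \<open>L(X,[0,1])\<close>. So the law of
  \<open>L(X,[0,1])\<close>, a probability measure on \<open>[0,1]\<close>, is invariant under the rotations of
  \<open>\<real>/\<int>\<close>. Such a measure has no atoms, and its distribution function is then additive and
  monotone on \<open>[0,1]\<close> with value \<open>1\<close> at \<open>1\<close>, hence the identity.
\<close>

lemma additive_mono_eq_id:
  fixes f :: "real \<Rightarrow> real"
  assumes add: "\<And>a b. 0 < a \<Longrightarrow> 0 < b \<Longrightarrow> a + b \<le> 1 \<Longrightarrow> f (a + b) = f a + f b"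
    and mono: "\<And>a b. 0 < a \<Longrightarrow> a \<le> b \<Longrightarrow> b \<le> 1 \<Longrightarrow> f a \<le> f b"
    and one: "f 1 = 1"
    and x: "0 < x" "x \<le> 1"
  shows "f x = x"
proof -
  have mult: "f (real k * y) = real k * f y" if "1 \<le> k" "0 < y" "real k * y \<le> 1" for k y
    using that
  proof (induction k rule: nat_induct_at_least)
    case (Suc k)
    have "real k * y \<le> 1" using Suc.prems by (simp add: algebra_simps)
    then have "f (real k * y + y) = f (real k * y) + f y"
      using Suc.prems Suc.hyps by (intro add) (auto simp: algebra_simps)
    then show ?case using Suc by (simp add: algebra_simps)
  qed simp
  have grid: "f (real k / n) = real k / n" if "1 \<le> k" "k \<le> n" for k n :: nat
  proof -
    have "1 = real n * f (1 / n)" using mult[of n "1 / n"] that one by simp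
    then have "f (1 / n) = 1 / n" using that by (simp add: field_simps)
    then show ?thesis using mult[of k "1 / n"] that by (simp add: divide_le_eq)
  qed
  have "\<bar>f x - x\<bar> \<le> e" if e: "0 < e" and "x < 1" for e
  proof -
    obtain n :: nat where n: "inverse (real n) < min e x" "0 < n"
      using ex_inverse_of_nat_less[of "min e x"] e x by auto
    define k where "k = nat \<lfloor>real n * x\<rfloor>"
    have "1 < real n * x" using n x by (simp add: field_simps)
    then have "1 \<le> \<lfloor>real n * x\<rfloor>" by (simp add: le_floor_iff)
    then have k: "real k \<le> real n * x" "real n * x < real k + 1" "1 \<le> k"
      using x unfolding k_def by linarith+
    have "real k < real n"
    proof -
      have "real n * x < real n" using \<open>x < 1\<close> n by simp
      then show ?thesis using k by linarith
    qed
    then have "k < n" by simp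
    have "x - 1 / n = (real n * x - 1) / n" "x + 1 / n = (real n * x + 1) / n"
      using n by (simp_all add: field_simps)
    then have lo: "x - 1 / n < real k / n" "real k / n \<le> x"
      and hi: "x \<le> real (Suc k) / n" "real (Suc k) / n \<le> x + 1 / n"
      using k n by (auto intro: divide_strict_right_mono divide_right_mono
          simp: divide_le_eq le_divide_eq mult.commute)
    have "f (real k / n) \<le> f x"
      using lo k n x by (intro mono) auto
    moreover have "f x \<le> f (real (Suc k) / n)"
      using hi \<open>k < n\<close> n x by (intro mono) (auto simp: divide_le_eq)
    ultimately have "x - 1 / n < f x" "f x \<le> x + 1 / n"
      using grid[of k n] grid[of "Suc k" n] \<open>k < n\<close> k lo hi by auto
    then show ?thesis using n by (simp add: divide_inverse abs_le_iff)
  qed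
  then have "x < 1 \<Longrightarrow> \<bar>f x - x\<bar> \<le> 0"
    by (metis add_0 field_le_epsilon)
  then show ?thesis
    using one x by (cases "x = 1") auto
qed

text \<open>
  The law on \<open>[0,1]\<close> of a variable whose class mod 1 is rotation invariant in law. The points
  \<open>0\<close> and \<open>1\<close> are the same point of the circle, hence they are measured together.
\<close>
locale rotation_invariant_unit_law = prob_space \<mu> for \<mu> :: "real measure" +
  assumes sets_eq_borel [measurable_cong]: "sets \<mu> = sets borel"
    and measure_unit_interval: "measure \<mu> {0..1} = 1"
    and measure_Ioo_rotate:
      "\<And>c h. 0 < c \<Longrightarrow> 0 < h \<Longrightarrow> c + h \<le> 1 \<Longrightarrow> measure \<mu> {c<..<c+h} = measure \<mu> {0<..<h}"
    and measure_endpoints_le: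
      "\<And>c. 0 < c \<Longrightarrow> c < 1 \<Longrightarrow> measure \<mu> {0, 1} \<le> measure \<mu> {c}"
begin

lemma borel_sets_in [simp]: "A \<in> sets borel \<Longrightarrow> A \<in> sets \<mu>"
  by (simp add: sets_eq_borel)

lemma space_eq_UNIV [simp]: "space \<mu> = UNIV"
  using sets_eq_imp_space_eq[OF sets_eq_borel] by simp

lemma measure_Ioo_0_tendsto_0: "(\<lambda>n. measure \<mu> {0<..<inverse (real (Suc n))}) \<longlonglongrightarrow> 0"
proof -
  have "decseq (\<lambda>n. {0<..<inverse (real (Suc n))})"
  proof (rule decseq_SucI)
    fix n
    have "inverse (real (Suc (Suc n))) \<le> inverse (real (Suc n))"
      by (rule le_imp_inverse_le) auto
    then show "{0<..<inverse (real (Suc (Suc n)))} \<subseteq> {0<..<inverse (real (Suc n))}"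
      unfolding subset_iff greaterThanLessThan_iff by (meson order.strict_trans2)
  qed
  then have "(\<lambda>n. measure \<mu> {0<..<inverse (real (Suc n))}) \<longlonglongrightarrow> measure \<mu> (\<Inter>n. {0<..<inverse (real (Suc n))})"
    by (intro finite_Lim_measure_decseq) auto
  moreover have "(\<Inter>n. {0<..<inverse (real (Suc n))}) = {}"
  proof safe
    fix x assume "x \<in> (\<Inter>n. {0<..<inverse (real (Suc n))})"
    then have "0 < x" "\<And>n. x < inverse (real (Suc n))" by auto
    obtain n where "0 < n" "inverse (real n) < x"
      using ex_inverse_of_nat_less[OF \<open>0 < x\<close>] by blast
    then have "inverse (real (Suc (n - 1))) < x" by simp
    with \<open>x < inverse (real (Suc (n - 1)))\<close> show "x \<in> {}" by simp
  qed
  ultimately show ?thesis by simp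
qed

lemma measure_singleton_interior:
  assumes "0 < y" "y < 1"
  shows "measure \<mu> {y} = 0"
proof -
  have "\<forall>\<^sub>F n in sequentially. inverse (real (Suc n)) < min y (1 - y)"
    using assms by (intro order_tendstoD(2)[OF LIMSEQ_inverse_real_of_nat]) auto
  then have "\<forall>\<^sub>F n in sequentially. measure \<mu> {y} \<le> measure \<mu> {0<..<inverse (real (Suc n))}"
  proof eventually_elim
    case (elim n)
    define h where "h = inverse (real (Suc n))"
    have "0 < h" "h < y" "h < 1 - y" using elim by (auto simp: h_def)
    have "measure \<mu> {y} \<le> measure \<mu> {y - h/2<..<(y - h/2) + h}"
      using \<open>0 < h\<close> by (intro finite_measure_mono) auto
    also have "\<dots> = measure \<mu> {0<..<h}"
      using \<open>0 < h\<close> \<open>h < y\<close> \<open>h < 1 - y\<close> by (intro measure_Ioo_rotate) auto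
    finally show ?case by (simp add: h_def)
  qed
  then have "measure \<mu> {y} \<le> 0"
    by (intro tendsto_lowerbound[OF measure_Ioo_0_tendsto_0]) auto
  then show ?thesis by (simp add: measure_le_0_iff)
qed

lemma measure_singleton_unit_interval:
  assumes "0 \<le> y" "y \<le> 1"
  shows "measure \<mu> {y} = 0"
proof -
  have "measure \<mu> {0, 1} = 0"
    using measure_endpoints_le[of "1/2"] measure_singleton_interior[of "1/2"]
    by (simp add: measure_le_0_iff)
  then have "measure \<mu> {0} = 0" "measure \<mu> {1} = 0"
    using finite_measure_mono[of "{0}" "{0, 1}"] finite_measure_mono[of "{1}" "{0, 1}"]
    by (auto simp: measure_le_0_iff)
  then show ?thesis
    using assms measure_singleton_interior[of y] by (cases "y = 0 \<or> y = 1") auto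
qed

lemma measure_atMost_0: "measure \<mu> {..0} = 0"
proof -
  have "measure \<mu> {..<0} \<le> measure \<mu> (space \<mu> - {0..1})"
    by (intro finite_measure_mono) auto
  also have "\<dots> = 0"
    using measure_unit_interval prob_compl[of "{0..1}"] by simp
  finally have "measure \<mu> {..<0} = 0" by (simp add: measure_le_0_iff)
  have "measure \<mu> {..0} = measure \<mu> {..<0} + measure \<mu> {0}"
    by (subst ivl_disj_un_singleton(2)[symmetric]) (rule finite_measure_Union, auto)
  then show ?thesis
    using \<open>measure \<mu> {..<0} = 0\<close> measure_singleton_unit_interval[of 0] by simp
qed

lemma measure_atMost_eq_Ioo:
  assumes "0 < b" "b \<le> 1"
  shows "measure \<mu> {..b} = measure \<mu> {0<..<b}"
proof -
  have "{..b} = ({..0} \<union> {0<..<b}) \<union> {b}" using assms by auto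
  then have "measure \<mu> {..b} = measure \<mu> ({..0} \<union> {0<..<b}) + measure \<mu> {b}"
    using assms by (simp only:) (rule finite_measure_Union, auto)
  also have "\<dots> = measure \<mu> {..0} + measure \<mu> {0<..<b} + measure \<mu> {b}"
    by (subst finite_measure_Union) auto
  finally show ?thesis
    using assms measure_atMost_0 measure_singleton_unit_interval[of b] by simp
qed

lemma measure_atMost_add:
  assumes "0 < a" "0 < b" "a + b \<le> 1"
  shows "measure \<mu> {..a + b} = measure \<mu> {..a} + measure \<mu> {..b}"
proof -
  have "{..a + b} = ({..a} \<union> {a<..<a + b}) \<union> {a + b}" using assms by auto
  then have "measure \<mu> {..a + b} = measure \<mu> ({..a} \<union> {a<..<a + b}) + measure \<mu> {a + b}"
    using assms by (simp only:) (rule finite_measure_Union, auto)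
  also have "\<dots> = measure \<mu> {..a} + measure \<mu> {a<..<a + b} + measure \<mu> {a + b}"
    by (subst finite_measure_Union) auto
  finally show ?thesis
    using assms measure_singleton_unit_interval[of "a + b"] measure_Ioo_rotate[of a b]
      measure_atMost_eq_Ioo[of b]
    by simp
qed

theorem measure_atMost_eq:
  assumes "0 \<le> x" "x \<le> 1"
  shows "measure \<mu> {..x} = x"
proof (cases "x = 0")
  case False
  have one: "measure \<mu> {..1::real} = 1"
    using measure_unit_interval finite_measure_mono[of "{0..1}" "{..1::real}"] prob_le_1[of "{..1}"]
    by simp
  show ?thesis
  proof (rule additive_mono_eq_id[where f = "\<lambda>x. measure \<mu> {..x}"])
    show "measure \<mu> {..a + b} = measure \<mu> {..a} + measure \<mu> {..b}"
      if "0 < a" "0 < b" "a + b \<le> 1" for a b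
      using that by (rule measure_atMost_add)
    show "measure \<mu> {..a} \<le> measure \<mu> {..b}" if "a \<le> b" for a b :: real
      using that by (intro finite_measure_mono) auto
  qed (use assms False one in auto)
qed (simp add: measure_atMost_0)

end

lemma Ints_diff_unit_interval_Ioo_iff:
  fixes s t c h :: real
  assumes "s \<in> {0..1}" "t \<in> {0..1}" "t - (s + c) \<in> \<int>" "0 < c" "0 < h" "c + h \<le> 1"
  shows "s \<in> {0<..<h} \<longleftrightarrow> t \<in> {c<..<c + h}"
proof -
  obtain m where m: "t - (s + c) = of_int m" using assms(3) by (auto elim: Ints_cases)
  consider "real_of_int m \<le> -1" | "m = 0" | "real_of_int m \<ge> 1" by linarith
  then show ?thesis by cases (use assms m in auto)
qed

lemma Ints_diff_unit_interval_endpoint: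
  fixes s t c :: real
  assumes "s \<in> {0..1}" "t \<in> {0, 1}" "t - (s + c) \<in> \<int>" "0 < c" "c < 1"
  shows "s = 1 - c"
proof -
  obtain m where m: "t - (s + c) = of_int m" using assms(3) by (auto elim: Ints_cases)
  consider "real_of_int m \<le> -2" | "m = -1" | "m = 0" | "real_of_int m \<ge> 1" by linarith
  then show ?thesis by cases (use assms m in auto)
qed

lemma (in prob_space) uniform_01_if_congruent_shifts:
  fixes T :: "'a \<Rightarrow> real" and S :: "real \<Rightarrow> 'a \<Rightarrow> real"
  assumes T [measurable]: "T \<in> borel_measurable M" and S [measurable]: "\<And>c. S c \<in> borel_measurable M"
    and law: "\<And>c. distr M borel (S c) = distr M borel T"
    and T_range: "\<And>\<omega>. \<omega> \<in> space M \<Longrightarrow> T \<omega> \<in> {0..1}"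
    and S_range: "\<And>\<omega> c. \<omega> \<in> space M \<Longrightarrow> S c \<omega> \<in> {0..1}"
    and congruent: "\<And>\<omega> c. \<omega> \<in> space M \<Longrightarrow> T \<omega> - (S c \<omega> + c) \<in> \<int>"
  shows "distributed M lborel T (\<lambda>x. ennreal (indicator {0..1} x))"
proof -
  let ?\<mu> = "distr M borel T"
  have \<mu>_T: "measure ?\<mu> B = prob (T -` B \<inter> space M)" if "B \<in> sets borel" for B
    using that by (simp add: measure_distr)
  have \<mu>_S: "measure ?\<mu> B = prob (S c -` B \<inter> space M)" if "B \<in> sets borel" for B c
    using that by (simp add: measure_distr flip: law[of c])
  interpret \<mu>: rotation_invariant_unit_law ?\<mu>
  proof (intro rotation_invariant_unit_law.intro rotation_invariant_unit_law_axioms.intro)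
    show "prob_space ?\<mu>" by (rule prob_space_distr) simp
    show "measure ?\<mu> {0..1} = 1"
      using T_range by (simp add: \<mu>_T prob_space Int_absorb1 subset_eq)
    show "measure ?\<mu> {c<..<c + h} = measure ?\<mu> {0<..<h}" if "0 < c" "0 < h" "c + h \<le> 1" for c h
    proof -
      have "T -` {c<..<c + h} \<inter> space M = S c -` {0<..<h} \<inter> space M"
        using Ints_diff_unit_interval_Ioo_iff[OF S_range T_range congruent] that by blast
      then show ?thesis using \<mu>_T[of "{c<..<c + h}"] \<mu>_S[of "{0<..<h}" c] by simp
    qed
    show "measure ?\<mu> {0, 1} \<le> measure ?\<mu> {c}" if "0 < c" "c < 1" for c
    proof -
      have "T -` {0, 1} \<inter> space M \<subseteq> S (1 - c) -` {c} \<inter> space M"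
        using Ints_diff_unit_interval_endpoint[OF S_range _ congruent, of _ "1 - c"] that by auto
      then have "prob (T -` {0, 1} \<inter> space M) \<le> prob (S (1 - c) -` {c} \<inter> space M)"
        by (intro finite_measure_mono) auto
      then show ?thesis using \<mu>_T[of "{0, 1}"] \<mu>_S[of "{c}" "1 - c"] by simp
    qed
  qed simp
  have "\<P>(\<omega> in M. T \<omega> \<le> t) = t" if "0 \<le> t" "t \<le> 1" for t
    using \<mu>.measure_atMost_eq[OF that] \<mu>_T[of "{..t}"] by (simp add: vimage_def Collect_conj_eq Int_commute)
  then have "distributed M lborel T (\<lambda>x. indicator {0..1} x / measure lborel {0..1::real})"
    by (intro uniform_distrI_borel_atLeastAtMost) auto
  then show ?thesis by simp
qed

lemma space_cyl_sigma [simp]: "space (cyl_sigma H) = H"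
  unfolding cyl_sigma_def by (rule space_measure_of) auto

lemma measurable_cyl_sigma:
  fixes Y :: "'a \<Rightarrow> real \<Rightarrow> real"
  assumes "\<And>t. (\<lambda>\<omega>. Y \<omega> t) \<in> borel_measurable M" and "\<And>\<omega>. \<omega> \<in> space M \<Longrightarrow> Y \<omega> \<in> H"
  shows "Y \<in> measurable M (cyl_sigma H)"
  unfolding cyl_sigma_def
proof (rule measurable_measure_of)
  fix A assume "A \<in> {{g \<in> H. g t \<in> B} | t B. B \<in> sets borel}"
  then obtain t B where A: "A = {g \<in> H. g t \<in> B}" "B \<in> sets borel" by auto
  have "Y -` A \<inter> space M = (\<lambda>\<omega>. Y \<omega> t) -` B \<inter> space M" using assms(2) A by auto
  then show "Y -` A \<inter> space M \<in> sets M" using measurable_sets[OF assms(1) A(2)] by simp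
qed (use assms(2) in auto)

lemma PiE_UNIV_UNIV: "(\<Pi>\<^sub>E i\<in>UNIV. UNIV) = UNIV"
  by (auto simp: PiE_def extensional_def)

lemma sets_cyl_sigmaE:
  fixes H :: "(real \<Rightarrow> real) set"
  assumes "A \<in> sets (cyl_sigma H)"
  obtains A' where "A' \<in> sets (Pi\<^sub>M UNIV (\<lambda>_. borel :: real measure))" "A = A' \<inter> H"
proof -
  define G :: "(real \<Rightarrow> real) set set"
    where "G = {{f \<in> \<Pi>\<^sub>E i\<in>UNIV. space borel. f i \<in> B} | i B. i \<in> UNIV \<and> B \<in> sets borel}"
  have gen: "{{g \<in> H. g t \<in> B} | t B. B \<in> sets borel} = {id -` A \<inter> H | A. A \<in> G}"
  proof (intro equalityI subsetI)
    fix S assume "S \<in> {{g \<in> H. g t \<in> B} | t B. B \<in> sets borel}"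
    then obtain t B where "S = {g \<in> H. g t \<in> B}" "B \<in> sets borel" by blast
    then have "S = id -` {f \<in> \<Pi>\<^sub>E i\<in>UNIV. space borel. f t \<in> B} \<inter> H"
      "{f \<in> \<Pi>\<^sub>E i\<in>UNIV. space borel. f t \<in> B} \<in> G"
      by (auto simp: G_def PiE_UNIV_UNIV)
    then show "S \<in> {id -` A \<inter> H | A. A \<in> G}" by blast
  next
    fix S assume "S \<in> {id -` A \<inter> H | A. A \<in> G}"
    then obtain t B where "S = {g \<in> H. g t \<in> B}" "B \<in> sets borel"
      by (auto simp: G_def PiE_UNIV_UNIV)
    then show "S \<in> {{g \<in> H. g t \<in> B} | t B. B \<in> sets borel}" by blast
  qed
  have "sets (cyl_sigma H) = sigma_sets H {{g \<in> H. g t \<in> B} | t B. B \<in> sets borel}"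
    unfolding cyl_sigma_def by (rule sets_measure_of) auto
  also have "\<dots> = {id -` A \<inter> H | A. A \<in> sigma_sets UNIV G}"
    unfolding gen by (rule sigma_sets_vimage_commute[symmetric]) auto
  also have "sigma_sets UNIV G = sets (Pi\<^sub>M UNIV (\<lambda>_. borel :: real measure))"
    unfolding G_def by (subst sets_PiM_single) (simp add: PiE_UNIV_UNIV)
  finally show ?thesis using assms that by auto
qed

lemma measurable_PiM_UNIV_borel:
  fixes Y :: "'a \<Rightarrow> real \<Rightarrow> real"
  assumes "\<And>t. (\<lambda>\<omega>. Y \<omega> t) \<in> borel_measurable M"
  shows "Y \<in> measurable M (Pi\<^sub>M UNIV (\<lambda>_. borel :: real measure))"
proof -
  have "(\<lambda>\<omega> t. Y \<omega> t) \<in> measurable M (Pi\<^sub>M UNIV (\<lambda>_. borel :: real measure))"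
    by (rule measurable_PiM_single') (auto simp: assms PiE_UNIV_UNIV)
  then show ?thesis by simp
qed

lemma distr_PiM_UNIV_eqI:
  fixes Y1 Y2 :: "'a \<Rightarrow> real \<Rightarrow> real"
  assumes "finite_measure M"
    and Y1: "\<And>t. (\<lambda>\<omega>. Y1 \<omega> t) \<in> borel_measurable M"
    and Y2: "\<And>t. (\<lambda>\<omega>. Y2 \<omega> t) \<in> borel_measurable M"
    and fdd: "\<And>J. finite J \<Longrightarrow> distr M (Pi\<^sub>M J (\<lambda>_. borel)) (\<lambda>\<omega>. \<lambda>t\<in>J. Y1 \<omega> t) =
               distr M (Pi\<^sub>M J (\<lambda>_. borel)) (\<lambda>\<omega>. \<lambda>t\<in>J. Y2 \<omega> t)"
  shows "distr M (Pi\<^sub>M UNIV (\<lambda>_. borel)) Y1 = distr M (Pi\<^sub>M UNIV (\<lambda>_. borel)) Y2"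
proof (rule measure_eqI_PiM_infinite)
  show "finite_measure (distr M (Pi\<^sub>M UNIV (\<lambda>_. borel)) Y1)"
    using assms(1) by (rule finite_measure.finite_measure_distr) (rule measurable_PiM_UNIV_borel[OF Y1])
  fix A :: "real \<Rightarrow> real set" and J :: "real set"
  assume J: "finite J" "J \<subseteq> UNIV" "\<And>i. i \<in> J \<Longrightarrow> A i \<in> sets borel"
  have emb: "emeasure (distr M (Pi\<^sub>M UNIV (\<lambda>_. borel)) Y) (prod_emb UNIV (\<lambda>_. borel) J (Pi\<^sub>E J A))
      = emeasure (distr M (Pi\<^sub>M J (\<lambda>_. borel)) (\<lambda>\<omega>. \<lambda>t\<in>J. Y \<omega> t)) (Pi\<^sub>E J A)"
    if Y: "\<And>t. (\<lambda>\<omega>. Y \<omega> t) \<in> borel_measurable M" for Y :: "'a \<Rightarrow> real \<Rightarrow> real"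
  proof -
    have box: "Pi\<^sub>E J A \<in> sets (Pi\<^sub>M J (\<lambda>_. borel))"
      using J by (intro sets_PiM_I_finite) auto
    have "emeasure (distr M (Pi\<^sub>M UNIV (\<lambda>_. borel)) Y) (prod_emb UNIV (\<lambda>_. borel) J (Pi\<^sub>E J A))
        = emeasure M (Y -` prod_emb UNIV (\<lambda>_. borel) J (Pi\<^sub>E J A) \<inter> space M)"
      using J box by (intro emeasure_distr measurable_PiM_UNIV_borel Y measurable_prod_emb) auto
    also have "Y -` prod_emb UNIV (\<lambda>_. borel) J (Pi\<^sub>E J A) \<inter> space M
        = (\<lambda>\<omega>. \<lambda>t\<in>J. Y \<omega> t) -` Pi\<^sub>E J A \<inter> space M"
      by (auto simp: prod_emb_def PiE_UNIV_UNIV)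
    also have "emeasure M \<dots> = emeasure (distr M (Pi\<^sub>M J (\<lambda>_. borel)) (\<lambda>\<omega>. \<lambda>t\<in>J. Y \<omega> t)) (Pi\<^sub>E J A)"
      using Y box by (intro emeasure_distr[symmetric] measurable_restrict) auto
    finally show ?thesis .
  qed
  show "emeasure (distr M (Pi\<^sub>M UNIV (\<lambda>_. borel)) Y1) (prod_emb UNIV (\<lambda>_. borel) J (Pi\<^sub>E J A))
      = emeasure (distr M (Pi\<^sub>M UNIV (\<lambda>_. borel)) Y2) (prod_emb UNIV (\<lambda>_. borel) J (Pi\<^sub>E J A))"
    by (simp only: emb[OF Y1] emb[OF Y2] fdd[OF J(1)])
qed (rule sets_distr)+

lemma distr_cyl_sigma_functional_eqI:
  fixes Y1 Y2 :: "'a \<Rightarrow> real \<Rightarrow> real" and F :: "(real \<Rightarrow> real) \<Rightarrow> real"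
  assumes "finite_measure M"
    and Y1: "\<And>t. (\<lambda>\<omega>. Y1 \<omega> t) \<in> borel_measurable M" "\<And>\<omega>. \<omega> \<in> space M \<Longrightarrow> Y1 \<omega> \<in> H"
    and Y2: "\<And>t. (\<lambda>\<omega>. Y2 \<omega> t) \<in> borel_measurable M" "\<And>\<omega>. \<omega> \<in> space M \<Longrightarrow> Y2 \<omega> \<in> H"
    and fdd: "\<And>J. finite J \<Longrightarrow> distr M (Pi\<^sub>M J (\<lambda>_. borel)) (\<lambda>\<omega>. \<lambda>t\<in>J. Y1 \<omega> t) =
               distr M (Pi\<^sub>M J (\<lambda>_. borel)) (\<lambda>\<omega>. \<lambda>t\<in>J. Y2 \<omega> t)"
    and F: "F \<in> borel_measurable (cyl_sigma H)"
  shows "distr M borel (\<lambda>\<omega>. F (Y1 \<omega>)) = distr M borel (\<lambda>\<omega>. F (Y2 \<omega>))"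
proof (rule measure_eqI)
  fix B assume "B \<in> sets (distr M borel (\<lambda>\<omega>. F (Y1 \<omega>)))"
  then have B: "B \<in> sets borel" by simp
  obtain A where A: "A \<in> sets (Pi\<^sub>M UNIV (\<lambda>_. borel))" "F -` B \<inter> H = A \<inter> H"
    using sets_cyl_sigmaE[OF measurable_sets[OF F B]] by auto
  have law: "emeasure (distr M borel (\<lambda>\<omega>. F (Y \<omega>))) B = emeasure (distr M (Pi\<^sub>M UNIV (\<lambda>_. borel)) Y) A"
    if Y: "\<And>t. (\<lambda>\<omega>. Y \<omega> t) \<in> borel_measurable M" "\<And>\<omega>. \<omega> \<in> space M \<Longrightarrow> Y \<omega> \<in> H"
    for Y :: "'a \<Rightarrow> real \<Rightarrow> real"
  proof -
    have "(\<lambda>\<omega>. F (Y \<omega>)) \<in> borel_measurable M"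
      using measurable_comp[OF measurable_cyl_sigma[OF Y] F] by (simp add: comp_def)
    moreover have "(\<lambda>\<omega>. F (Y \<omega>)) -` B \<inter> space M = Y -` A \<inter> space M"
      using A(2) Y(2) by blast
    ultimately show ?thesis
      using B A(1) measurable_PiM_UNIV_borel[OF Y(1)] by (simp add: emeasure_distr)
  qed
  show "emeasure (distr M borel (\<lambda>\<omega>. F (Y1 \<omega>))) B = emeasure (distr M borel (\<lambda>\<omega>. F (Y2 \<omega>))) B"
    using law[OF Y1] law[OF Y2] distr_PiM_UNIV_eqI[OF assms(1) Y1(1) Y2(1) fdd] by simp
qed simp

lemma stationary_process_distr_shift:
  fixes X :: "'a \<Rightarrow> real \<Rightarrow> real" and F :: "(real \<Rightarrow> real) \<Rightarrow> real"
  assumes "finite_measure M" "stationary_process M X"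
    and X_H: "\<And>\<omega>. \<omega> \<in> space M \<Longrightarrow> X \<omega> \<in> H"
    and shift_H: "\<And>g. g \<in> H \<Longrightarrow> shift_fun c g \<in> H"
    and F: "F \<in> borel_measurable (cyl_sigma H)"
  shows "distr M borel (\<lambda>\<omega>. F (shift_fun c (X \<omega>))) = distr M borel (\<lambda>\<omega>. F (X \<omega>))"
proof (rule distr_cyl_sigma_functional_eqI[OF assms(1) _ _ _ X_H _ F])
  show "\<And>t. (\<lambda>\<omega>. X \<omega> t) \<in> borel_measurable M" "\<And>t. (\<lambda>\<omega>. shift_fun c (X \<omega>) t) \<in> borel_measurable M"
    using assms(2) by (simp_all add: stationary_process_def shift_fun_def)
  show "\<And>\<omega>. \<omega> \<in> space M \<Longrightarrow> shift_fun c (X \<omega>) \<in> H" using X_H shift_H by blast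
  show "distr M (Pi\<^sub>M J (\<lambda>_. borel)) (\<lambda>\<omega>. \<lambda>t\<in>J. shift_fun c (X \<omega>) t) =
      distr M (Pi\<^sub>M J (\<lambda>_. borel)) (\<lambda>\<omega>. \<lambda>t\<in>J. X \<omega> t)" if "finite J" for J
    using assms(2) that by (simp add: stationary_process_def shift_fun_def)
qed

lemma unit_interval_in_compact_intervals: "{a..a + 1} \<in> compact_intervals"
  by (force simp: compact_intervals_def)

lemma invariant_ilfD:
  assumes "invariant_ilf H L" "g \<in> H" "I \<in> compact_intervals"
  shows invariant_ilf_range: "L g I \<in> ereal ` I"
    and invariant_ilf_shift: "L g I = L (shift_fun c g) ((\<lambda>x. x - c) ` I) + ereal c"
proof -
  note inv = assms(1)[unfolded invariant_ilf_def]
  note ilf = inv[THEN conjunct1, unfolded intrinsic_location_functional_def]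
  have "L g I \<in> ereal ` I \<union> {\<infinity>}" "L g I \<noteq> \<infinity>"
    using ilf[THEN conjunct2, THEN conjunct1] inv[THEN conjunct2, THEN conjunct1] assms(2,3)
    by blast+
  then show "L g I \<in> ereal ` I" by blast
  show "L g I = L (shift_fun c g) ((\<lambda>x. x - c) ` I) + ereal c"
    using ilf[THEN conjunct2, THEN conjunct2, THEN conjunct1] assms(2,3) by blast
qed

lemma invariant_ilf_mod_1:
  assumes "invariant_ilf H L" "g \<in> H"
  shows "real_of_ereal (L g {0..1}) - real_of_ereal (L g {a..a + 1}) \<in> \<int>"
  using assms(1)[unfolded invariant_ilf_def, THEN conjunct2, THEN conjunct2] assms(2) by blast

lemma invariant_ilf_unit_interval:
  assumes "invariant_ilf H L" "g \<in> H"
  obtains r where "r \<in> {0..1}" "L g {0..1} = ereal r"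
  using invariant_ilf_range[OF assms unit_interval_in_compact_intervals[of 0]] that by auto

lemma invariant_ilf_measurable:
  assumes "invariant_ilf H L"
  shows "(\<lambda>g. real_of_ereal (L g {0..1})) \<in> borel_measurable (cyl_sigma H)"
proof -
  have "(\<lambda>g. L g {0..1}) \<in> borel_measurable (cyl_sigma H)"
    using assms[unfolded invariant_ilf_def intrinsic_location_functional_def, THEN conjunct1,
        THEN conjunct1] unit_interval_in_compact_intervals[of 0]
    by simp
  then show ?thesis by measurable
qed

lemma invariant_ilf_shift_congruent:
  assumes L: "invariant_ilf H L" and g: "g \<in> H" "shift_fun c g \<in> H"
  shows "real_of_ereal (L g {0..1}) - (real_of_ereal (L (shift_fun c g) {0..1}) + c) \<in> \<int>"
proof -
  obtain r where r: "L (shift_fun c g) {0..1} = ereal r"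
    using invariant_ilf_unit_interval[OF L g(2)] by blast
  have "(\<lambda>x. x - c) ` {c..c + 1} = {0..1}"
    using image_add_atLeastAtMost'[of "- c" c "c + 1"] by simp
  then have "L g {c..c + 1} = ereal (r + c)"
    using invariant_ilf_shift[OF L g(1) unit_interval_in_compact_intervals[of c], where c = c] r
    by simp
  then show ?thesis
    using invariant_ilf_mod_1[OF L g(1), of c] r by simp
qed

theorem mainTheorem5:
  fixes H :: "(real \<Rightarrow> real) set"
    and L :: "(real \<Rightarrow> real) \<Rightarrow> real set \<Rightarrow> ereal"
    and M :: "'a measure"
    and X :: "'a \<Rightarrow> real \<Rightarrow> real"
  assumes "periodic_shift_space H"
    and "invariant_ilf H L"
    and "prob_space M"
    and "periodic_stationary_process M H X"
  shows "distributed M lborel (\<lambda>\<omega>. real_of_ereal (L (X \<omega>) {0..1}))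
           (\<lambda>x. ennreal (indicator {0..1} x))"
proof -
  interpret prob_space M by fact
  define F where "F g = real_of_ereal (L g {0..1})" for g
  have shift_H: "\<And>g c. g \<in> H \<Longrightarrow> shift_fun c g \<in> H"
    using assms(1) by (simp add: periodic_shift_space_def)
  have stat: "stationary_process M X" and X_H: "\<And>\<omega>. \<omega> \<in> space M \<Longrightarrow> X \<omega> \<in> H"
    using assms(4) by (auto simp: periodic_stationary_process_def)
  have F: "F \<in> borel_measurable (cyl_sigma H)"
    unfolding F_def using assms(2) by (rule invariant_ilf_measurable)
  have F_range: "F g \<in> {0..1}" if "g \<in> H" for g
    using invariant_ilf_unit_interval[OF assms(2) that] by (metis F_def real_of_ereal.simps(1))
  have "distributed M lborel (\<lambda>\<omega>. F (X \<omega>)) (\<lambda>x. ennreal (indicator {0..1} x))"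
  proof (rule uniform_01_if_congruent_shifts[where S = "\<lambda>c \<omega>. F (shift_fun c (X \<omega>))"])
    have "(\<lambda>\<omega>. shift_fun c (X \<omega>)) \<in> measurable M (cyl_sigma H)"
      "X \<in> measurable M (cyl_sigma H)" for c
      using stat X_H shift_H by (auto intro!: measurable_cyl_sigma simp: stationary_process_def shift_fun_def)
    with F show "(\<lambda>\<omega>. F (X \<omega>)) \<in> borel_measurable M" "(\<lambda>\<omega>. F (shift_fun c (X \<omega>))) \<in> borel_measurable M" for c
      by (auto intro: measurable_compose)
    show "distr M borel (\<lambda>\<omega>. F (shift_fun c (X \<omega>))) = distr M borel (\<lambda>\<omega>. F (X \<omega>))" for c
      using stationary_process_distr_shift[OF finite_measure_axioms stat X_H shift_H F] .
    show "F (X \<omega>) \<in> {0..1}" "F (shift_fun c (X \<omega>)) \<in> {0..1}"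
      and "F (X \<omega>) - (F (shift_fun c (X \<omega>)) + c) \<in> \<int>" if "\<omega> \<in> space M" for \<omega> c
      using F_range invariant_ilf_shift_congruent[OF assms(2)] X_H[OF that] shift_H
      by (simp_all add: F_def)
  qed
  then show ?thesis by (simp add: F_def)
qed

end
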